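(* Let $k,n$ be integers with $2\le k\le n$. Then $d^E_3(n,k)\le \max\{d^E_3(n-1,k-1),\,d^E_3(n-2,k-2)\}$.
   Context: For $k\le n$, $d^E_3(n,k)$ denotes the largest minimum distance among all ternary Euclidean LCD $[n,k]$ codes, i.e. $k$-dimensional subspaces $C\subseteq\mathbb{F}_3^n$ with $C\cap C^{\perp_E}=\{0\}$, where $C^{\perp_E}$ is the dual with respect to $\langle x,y\rangle_E=\sum x_iy_i$. *)

theory Defs
  imports "Berlekamp_Zassenhaus.Finite_Field" "HOL-Library.Function_Algebras"
begin

typedef three = "{0::nat, 1, 2}" by auto

lemma card_three: "CARD(three) = 3"
  by (simp add: type_definition.card[OF type_definition_three])

instance three :: finite
proof
  show "finite (UNIV :: three set)"
    by (metis card_three card.infinite zero_neq_numeral)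
qed

instance three :: prime_card
  by standard (simp add: card_three)

type_synonym F3 = "three mod_ring"

lemma CARD_F3: "CARD(F3) = 3"
  by (simp add: card_three)

text \<open>Words are functions nat to F_3; F_3^n is the set of words supported on {0..<n}.
  The set of all words is a vector space over F_3 with pointwise operations.\<close>

definition scaleF3 :: "F3 \<Rightarrow> (nat \<Rightarrow> F3) \<Rightarrow> (nat \<Rightarrow> F3)" where
  "scaleF3 c v = (\<lambda>i. c * v i)"

interpretation F3vs: vector_space scaleF3
  by standard (auto simp: scaleF3_def algebra_simps fun_eq_iff)

definition F3n :: "nat \<Rightarrow> (nat \<Rightarrow> F3) set" where
  "F3n n = {v. \<forall>i\<ge>n. v i = 0}"

definition inner_E :: "nat \<Rightarrow> (nat \<Rightarrow> F3) \<Rightarrow> (nat \<Rightarrow> F3) \<Rightarrow> F3" where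
  "inner_E n x y = (\<Sum>i<n. x i * y i)"

definition dual_E :: "nat \<Rightarrow> (nat \<Rightarrow> F3) set \<Rightarrow> (nat \<Rightarrow> F3) set" where
  "dual_E n C = {y \<in> F3n n. \<forall>x\<in>C. inner_E n x y = 0}"

definition linear_code :: "nat \<Rightarrow> nat \<Rightarrow> (nat \<Rightarrow> F3) set \<Rightarrow> bool" where
  "linear_code n k C \<longleftrightarrow> C \<subseteq> F3n n \<and> F3vs.subspace C \<and> F3vs.dim C = k"

definition LCD_code :: "nat \<Rightarrow> nat \<Rightarrow> (nat \<Rightarrow> F3) set \<Rightarrow> bool" where
  "LCD_code n k C \<longleftrightarrow> linear_code n k C \<and> C \<inter> dual_E n C = {0}"

definition wt :: "nat \<Rightarrow> (nat \<Rightarrow> F3) \<Rightarrow> nat" where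
  "wt n x = card {i. i < n \<and> x i \<noteq> 0}"

text \<open>Minimum distance = minimum weight of a nonzero codeword
  (convention: 0 for the zero code, via Inf of the empty set of naturals).\<close>
definition min_dist :: "nat \<Rightarrow> (nat \<Rightarrow> F3) set \<Rightarrow> nat" where
  "min_dist n C = Inf {wt n x | x. x \<in> C \<and> x \<noteq> 0}"

definition dE3 :: "nat \<Rightarrow> nat \<Rightarrow> nat" where
  "dE3 n k = Max {min_dist n C | C. LCD_code n k C}"

end

theory Submission
  imports Defs "HOL-Combinatorics.Permutations"
begin

text \<open>
  Let C be an LCD [n,k] code of minimum distance d. A subcode of C of dimension k' that vanishes on
  a set Z of coordinates and on which the Euclidean form is still nondegenerate becomes, after
  deleting the coordinates in Z, an LCD [n - |Z|, k'] code of minimum distance at least d.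
  If for some coordinate i the subcode C_i = {c. c_i = 0} is proper and nondegenerate, this gives
  d \<le> d^E_3(n-1,k-1). Otherwise every coordinate functional y \<mapsto> y_l on C is represented
  by an isotropic vector u_l of C. Choosing i, j with u_i(j) \<noteq> 0, the vectors u_i, u_j span a
  hyperbolic plane whose orthogonal complement in C is C_ij = {c. c_i = c_j = 0}, so C_ij is
  nondegenerate of dimension k - 2. It is nonzero: otherwise each u_l, being isotropic in a
  hyperbolic plane over a field of odd characteristic, would be a multiple of u_i or of u_j;
  this forces u_i(l) u_j(l) = 0 for all l, whence u_j(i) = <u_i, u_j> = 0.
\<close>

lemma F3_add_self_eq_0_iff: "(x::F3) + x = 0 \<longleftrightarrow> x = 0"
proof -
  have "x + x + x = of_nat CARD(three) * x"
    by (simp add: card_three algebra_simps)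
  also have "\<dots> = 0"
    by (simp del: of_nat_card_eq_0 add: of_nat_card_eq_0[where 'a=three])
  finally have "x + x + x = 0" .
  show ?thesis
  proof
    assume "x + x = 0"
    with \<open>x + x + x = 0\<close> show "x = 0"
      by simp
  qed simp
qed

lemma scaleF3_apply: "scaleF3 a x i = a * x i"
  by (simp add: scaleF3_def)


lemma inner_E_commute: "inner_E n x y = inner_E n y x"
  unfolding inner_E_def by (simp add: mult.commute)

lemma inner_E_zero_left [simp]: "inner_E n 0 y = 0"
  unfolding inner_E_def by simp

lemma inner_E_zero_right [simp]: "inner_E n y 0 = 0"
  unfolding inner_E_def by simp

lemma inner_E_add_left: "inner_E n (x + y) z = inner_E n x z + inner_E n y z"
  unfolding inner_E_def by (simp add: sum.distrib distrib_right)

lemma inner_E_add_right: "inner_E n z (x + y) = inner_E n z x + inner_E n z y"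
  by (metis inner_E_commute inner_E_add_left)

lemma inner_E_diff_right: "inner_E n z (x - y) = inner_E n z x - inner_E n z y"
  unfolding inner_E_def by (simp add: sum_subtractf right_diff_distrib)

lemma inner_E_scale_left: "inner_E n (scaleF3 a x) y = a * inner_E n x y"
  unfolding inner_E_def by (simp add: sum_distrib_left mult.assoc scaleF3_apply)

lemma inner_E_scale_right: "inner_E n y (scaleF3 a x) = a * inner_E n y x"
  by (metis inner_E_commute inner_E_scale_left)

lemma inner_E_eq_if_F3n:
  assumes "x \<in> F3n m" "m \<le> n"
  shows "inner_E m x y = inner_E n x y"
  unfolding inner_E_def
  by (rule sum.mono_neutral_cong_left) (use assms in \<open>auto simp: F3n_def\<close>)

lemma wt_eq_if_F3n:
  assumes "x \<in> F3n m" "m \<le> n"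
  shows "wt m x = wt n x"
proof -
  have "{i. i < m \<and> x i \<noteq> 0} = {i. i < n \<and> x i \<noteq> 0}"
    using assms by (auto simp: F3n_def) (meson not_le)
  then show ?thesis
    unfolding wt_def by simp
qed

definition nondegenerate :: "nat \<Rightarrow> (nat \<Rightarrow> F3) set \<Rightarrow> bool" where
  "nondegenerate n S \<longleftrightarrow> (\<forall>x\<in>S. (\<forall>y\<in>S. inner_E n x y = 0) \<longrightarrow> x = 0)"

lemma LCD_code_iff_nondegenerate: "LCD_code n k C \<longleftrightarrow> linear_code n k C \<and> nondegenerate n C"
proof -
  have "C \<inter> dual_E n C = {0} \<longleftrightarrow> nondegenerate n C"
    if "C \<subseteq> F3n n" "0 \<in> C" for C
    using that by (auto simp: dual_E_def nondegenerate_def inner_E_commute)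
  then show ?thesis
    unfolding LCD_code_def linear_code_def using F3vs.subspace_0 by blast
qed


lemma finite_F3n: "finite (F3n n)"
proof (rule finite_subset)
  show "F3n n \<subseteq> {f. \<forall>i. (i \<in> {..<n} \<longrightarrow> f i \<in> UNIV) \<and> (i \<notin> {..<n} \<longrightarrow> f i = 0)}"
    by (auto simp: F3n_def)
  show "finite {f::nat \<Rightarrow> F3. \<forall>i. (i \<in> {..<n} \<longrightarrow> f i \<in> UNIV) \<and> (i \<notin> {..<n} \<longrightarrow> f i = 0)}"
    by (rule finite_set_of_finite_funs) auto
qed

lemma F3vs_dim_insert:
  assumes "finite S" "x \<notin> F3vs.span S"
  shows "F3vs.dim (insert x S) = F3vs.dim S + 1"
proof -
  obtain B where B: "B \<subseteq> S" "F3vs.independent B" "S \<subseteq> F3vs.span B" "card B = F3vs.dim S"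
    using F3vs.basis_exists by blast
  have "finite B"
    using B(1) assms(1) finite_subset by blast
  have "F3vs.span B = F3vs.span S"
    using B(1,3) by (metis F3vs.span_eq F3vs.span_superset subset_trans)
  have "x \<notin> B"
    using assms(2) B(1) F3vs.span_superset by blast
  show ?thesis
  proof (rule F3vs.dim_unique[of "insert x B"])
    show "insert x B \<subseteq> insert x S"
      using B(1) by blast
    show "insert x S \<subseteq> F3vs.span (insert x B)"
      using B(3) F3vs.span_mono[of B "insert x B"] F3vs.span_superset[of "insert x B"] by blast
    show "F3vs.independent (insert x B)"
      using B(2) assms(2) \<open>F3vs.span B = F3vs.span S\<close> by (intro F3vs.independent_insertI) auto
    show "card (insert x B) = F3vs.dim S + 1"
      using \<open>finite B\<close> \<open>x \<notin> B\<close> B(4) by simp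
  qed
qed

lemma F3vs_subset_zero_if_dim_eq_0:
  assumes "finite S" "F3vs.dim S = 0"
  shows "S \<subseteq> {0}"
proof -
  obtain B where B: "B \<subseteq> S" "F3vs.independent B" "S \<subseteq> F3vs.span B" "card B = F3vs.dim S"
    using F3vs.basis_exists by blast
  have "finite B"
    using B(1) assms(1) finite_subset by blast
  then have "B = {}"
    using B(4) assms(2) by simp
  then show ?thesis
    using B(3) by simp
qed

lemma F3vs_ex_nonzero_if_dim_pos:
  assumes "1 \<le> F3vs.dim S"
  shows "\<exists>x\<in>S. x \<noteq> 0"
proof (rule ccontr)
  assume "\<not> ?thesis"
  then have "S \<subseteq> F3vs.span {}"
    by auto
  then have "F3vs.dim S \<le> card ({} :: (nat \<Rightarrow> F3) set)"
    by (rule F3vs.dim_le_card) simp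
  with assms show False
    by simp
qed

lemma F3vs_subspace_vanishing_coord:
  assumes "F3vs.subspace S"
  shows "F3vs.subspace {c\<in>S. c i = 0}"
  using assms unfolding F3vs.subspace_def by (auto simp: scaleF3_apply)

lemma F3vs_dim_vanishing_coord:
  assumes S: "F3vs.subspace S" "finite S" and w: "w \<in> S" "w i \<noteq> 0"
  shows "F3vs.dim S = F3vs.dim {c\<in>S. c i = 0} + 1"
proof -
  define D where "D = {c\<in>S. c i = 0}"
  have "F3vs.subspace D"
    unfolding D_def by (rule F3vs_subspace_vanishing_coord[OF S(1)])
  then have "F3vs.span D = D"
    by (rule F3vs.span_eq_iff[THEN iffD2])
  have "F3vs.span (insert w D) = S"
  proof (rule F3vs.span_subspace)
    show "insert w D \<subseteq> S"
      using w unfolding D_def by auto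
    show "S \<subseteq> F3vs.span (insert w D)"
    proof
      fix y assume "y \<in> S"
      then have "y - scaleF3 (y i / w i) w \<in> S"
        using w(1) S(1) F3vs.subspace_diff F3vs.subspace_scale by blast
      moreover have "(y - scaleF3 (y i / w i) w) i = 0"
        using w(2) by (simp add: scaleF3_apply)
      ultimately have "y - scaleF3 (y i / w i) w \<in> D"
        unfolding D_def by blast
      then show "y \<in> F3vs.span (insert w D)"
        unfolding F3vs.span_breakdown_eq \<open>F3vs.span D = D\<close> by blast
    qed
  qed (fact S(1))
  then have "F3vs.dim S = F3vs.dim (insert w D)"
    by (metis F3vs.dim_span)
  also have "\<dots> = F3vs.dim D + 1"
  proof (rule F3vs_dim_insert)
    show "finite D"
      using S(2) unfolding D_def by simp
    have "w \<notin> D"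
      using w(2) unfolding D_def by simp
    then show "w \<notin> F3vs.span D"
      unfolding \<open>F3vs.span D = D\<close> .
  qed
  finally show ?thesis
    unfolding D_def .
qed

lemma F3n_nonzero_imp_less: "x \<in> F3n n \<Longrightarrow> x l \<noteq> 0 \<Longrightarrow> l < n"
  unfolding F3n_def by (cases "l < n") auto

lemma F3vs_dim_inj_image:
  assumes "module_hom scaleF3 scaleF3 f" "inj f"
  shows "F3vs.dim (f ` S) = F3vs.dim S"
proof -
  interpret f: module_hom scaleF3 scaleF3 f
    by fact
  obtain B where B: "B \<subseteq> S" "F3vs.independent B" "S \<subseteq> F3vs.span B" "card B = F3vs.dim S"
    using F3vs.basis_exists by blast
  show ?thesis
  proof (rule F3vs.dim_unique[of "f ` B"])
    show "f ` B \<subseteq> f ` S"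
      using B(1) by blast
    show "f ` S \<subseteq> F3vs.span (f ` B)"
      unfolding f.span_image using B(3) by blast
    show "F3vs.independent (f ` B)"
      using B(2) inj_on_subset[OF assms(2) subset_UNIV] by (rule f.independent_injective_image)
    show "card (f ` B) = F3vs.dim S"
      using B(4) assms(2) by (simp add: card_image inj_on_subset)
  qed
qed


lemma F3vs_subspace_F3n: "F3vs.subspace (F3n k)"
  unfolding F3vs.subspace_def F3n_def by (auto simp: scaleF3_apply)

definition unit_vec :: "nat \<Rightarrow> nat \<Rightarrow> F3" where
  "unit_vec l = (\<lambda>i. if i = l then 1 else 0)"

lemma dim_F3n: "F3vs.dim (F3n k) = k"
proof (induction k)
  case 0
  have "F3n 0 \<subseteq> F3vs.span {}"
    by (auto simp: F3n_def fun_eq_iff)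
  then have "F3vs.dim (F3n 0) \<le> card ({} :: (nat \<Rightarrow> F3) set)"
    by (rule F3vs.dim_le_card) simp
  then show ?case
    by simp
next
  case (Suc k)
  have "unit_vec k \<in> F3n (Suc k)" "unit_vec k k \<noteq> 0"
    by (auto simp: F3n_def unit_vec_def)
  with F3vs_subspace_F3n finite_F3n
  have "F3vs.dim (F3n (Suc k)) = F3vs.dim {c\<in>F3n (Suc k). c k = 0} + 1"
    by (rule F3vs_dim_vanishing_coord)
  also have "{c\<in>F3n (Suc k). c k = 0} = F3n k"
    by (auto simp: F3n_def) (metis Suc_leI le_neq_implies_less)
  finally show ?case
    using Suc.IH by simp
qed

lemma inner_E_unit_vec:
  assumes "l < n"
  shows "inner_E n (unit_vec l) x = x l"
proof -
  have "inner_E n (unit_vec l) x = (\<Sum>i<n. if i = l then x i else 0)"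
    unfolding inner_E_def unit_vec_def by (rule sum.cong) auto
  also have "\<dots> = x l"
    using assms by (simp add: sum.delta)
  finally show ?thesis .
qed

lemma LCD_code_F3n:
  assumes "k \<le> n"
  shows "LCD_code n k (F3n k)"
  unfolding LCD_code_iff_nondegenerate linear_code_def
proof (intro conjI)
  show "F3n k \<subseteq> F3n n"
    using assms by (auto simp: F3n_def)
  show "F3vs.subspace (F3n k)"
    by (rule F3vs_subspace_F3n)
  show "F3vs.dim (F3n k) = k"
    by (rule dim_F3n)
  show "nondegenerate n (F3n k)"
    unfolding nondegenerate_def
  proof (intro ballI impI)
    fix x assume x: "x \<in> F3n k" and orth: "\<forall>y\<in>F3n k. inner_E n x y = 0"
    have "x l = 0" for l
    proof (cases "l < k")
      case True
      then have "unit_vec l \<in> F3n k"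
        by (auto simp: F3n_def unit_vec_def)
      with orth have "inner_E n x (unit_vec l) = 0"
        by blast
      with True assms show ?thesis
        using inner_E_unit_vec[of l n x] inner_E_commute[of n x] by simp
    next
      case False
      with x show ?thesis
        by (simp add: F3n_def)
    qed
    then show "x = 0"
      by auto
  qed
qed


lemma min_dist_le_wt: "x \<in> C \<Longrightarrow> x \<noteq> 0 \<Longrightarrow> min_dist n C \<le> wt n x"
  unfolding min_dist_def by (rule cInf_lower) auto

lemma min_dist_attained:
  assumes "x \<in> C" "x \<noteq> 0"
  shows "\<exists>y\<in>C. y \<noteq> 0 \<and> min_dist n C = wt n y"
proof -
  have "{wt n x | x. x \<in> C \<and> x \<noteq> 0} \<noteq> {}"
    using assms by auto
  then have "min_dist n C \<in> {wt n x | x. x \<in> C \<and> x \<noteq> 0}"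
    unfolding min_dist_def by (rule Inf_nat_def1)
  then show ?thesis
    by auto
qed

lemma min_dist_le_length:
  assumes "x \<in> C" "x \<noteq> 0"
  shows "min_dist n C \<le> n"
proof -
  have "min_dist n C \<le> wt n x"
    using assms by (rule min_dist_le_wt)
  also have "\<dots> \<le> card {..<n}"
    unfolding wt_def by (rule card_mono) auto
  finally show ?thesis
    by simp
qed

lemma min_dist_subcode:
  assumes "D \<subseteq> C" "1 \<le> F3vs.dim D"
  shows "min_dist n C \<le> min_dist n D"
proof -
  obtain x where "x \<in> D" "x \<noteq> 0"
    using F3vs_ex_nonzero_if_dim_pos[OF assms(2)] by blast
  then obtain y where "y \<in> D" "y \<noteq> 0" "min_dist n D = wt n y"
    using min_dist_attained by blast
  with assms(1) show ?thesis
    using min_dist_le_wt[of y C n] by auto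
qed

text \<open>The zero code contributes the unspecified value Inf {} of type nat.\<close>

lemma finite_LCD_min_dists: "finite {min_dist n C | C. LCD_code n k C}"
proof (rule finite_subset)
  show "{min_dist n C | C. LCD_code n k C} \<subseteq> insert (Inf {}) {..n}"
  proof
    fix d assume "d \<in> {min_dist n C | C. LCD_code n k C}"
    then obtain C where d: "d = min_dist n C"
      by blast
    show "d \<in> insert (Inf {}) {..n}"
    proof (cases "\<exists>x\<in>C. x \<noteq> 0")
      case True
      then show ?thesis
        using d min_dist_le_length by auto
    next
      case False
      then have "{wt n x | x. x \<in> C \<and> x \<noteq> 0} = {}"
        by auto
      then have "min_dist n C = Inf {}"
        unfolding min_dist_def by (rule arg_cong)
      with d show ?thesis
        by simp
    qed
  qed
qed simp

lemma min_dist_le_dE3: "LCD_code n k C \<Longrightarrow> min_dist n C \<le> dE3 n k"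
  unfolding dE3_def by (rule Max_ge[OF finite_LCD_min_dists]) auto

lemma dE3_le:
  assumes "k \<le> n" and "\<And>C. LCD_code n k C \<Longrightarrow> min_dist n C \<le> b"
  shows "dE3 n k \<le> b"
proof -
  have "{min_dist n C | C. LCD_code n k C} \<noteq> {}"
    using LCD_code_F3n[OF assms(1)] by blast
  with assms(2) show ?thesis
    unfolding dE3_def by (auto simp: Max_le_iff[OF finite_LCD_min_dists])
qed


section \<open>Deleting coordinates on which a code vanishes\<close>

lemma inner_E_comp_permutes:
  assumes "p permutes {..<n}"
  shows "inner_E n (x \<circ> p) (y \<circ> p) = inner_E n x y"
  unfolding inner_E_def using sum.permute[OF assms, of "\<lambda>i. x i * y i"] by (simp add: comp_def)

lemma wt_comp_permutes:
  assumes "p permutes {..<n}"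
  shows "wt n (x \<circ> p) = wt n x"
proof -
  have "wt n (x \<circ> p) = card (p -` {i. i < n \<and> x i \<noteq> 0})"
    unfolding wt_def by (rule arg_cong[where f = card]) (use permutes_in_image[OF assms] in auto)
  also have "\<dots> = wt n x"
    unfolding wt_def
    by (rule card_vimage_inj) (use permutes_inj[OF assms] permutes_surj[OF assms] in auto)
  finally show ?thesis .
qed

lemma comp_permutes_eq_0_iff:
  assumes "p permutes S"
  shows "x \<circ> p = 0 \<longleftrightarrow> x = 0"
proof
  assume "x \<circ> p = 0"
  show "x = 0"
  proof
    fix j
    obtain i where "j = p i"
      using permutes_surj[OF assms] by (rule surjE)
    with \<open>x \<circ> p = 0\<close> show "x j = 0 j"
      by (metis comp_apply zero_fun_def)
  qed
qed (simp add: zero_fun_def comp_def)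

lemma module_hom_comp_right: "module_hom scaleF3 scaleF3 (\<lambda>c. c \<circ> p)"
  by (rule module_hom.intro[OF F3vs.module_axioms F3vs.module_axioms module_hom_axioms.intro])
     (auto simp: fun_eq_iff scaleF3_def)

lemma inj_comp_permutes:
  assumes "p permutes S"
  shows "inj (\<lambda>c :: nat \<Rightarrow> F3. c \<circ> p)"
proof (rule injI)
  fix a b :: "nat \<Rightarrow> F3"
  assume "a \<circ> p = b \<circ> p"
  then have "(a - b) \<circ> p = 0"
    by (simp add: fun_eq_iff)
  then have "a - b = 0"
    by (simp only: comp_permutes_eq_0_iff[OF assms])
  then show "a = b"
    by simp
qed

lemma comp_permutes_in_F3n:
  assumes "p permutes {..<n}" "x \<in> F3n n"
  shows "x \<circ> p \<in> F3n n"
  using assms permutes_not_in[OF assms(1)] by (simp add: F3n_def)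

lemma nondegenerate_comp_permutes:
  assumes p: "p permutes {..<n}" and ndC: "nondegenerate n C"
  shows "nondegenerate n ((\<lambda>c. c \<circ> p) ` C)"
  unfolding nondegenerate_def
proof (intro ballI impI)
  fix x assume "x \<in> (\<lambda>c. c \<circ> p) ` C" and orth: "\<forall>y\<in>(\<lambda>c. c \<circ> p) ` C. inner_E n x y = 0"
  then obtain c where c: "c \<in> C" "x = c \<circ> p"
    by blast
  have "inner_E n c y = 0" if "y \<in> C" for y
  proof -
    have "inner_E n (c \<circ> p) (y \<circ> p) = 0"
      using orth that c(2) by blast
    then show ?thesis
      unfolding inner_E_comp_permutes[OF p] .
  qed
  with c(1) ndC have "c = 0"
    unfolding nondegenerate_def by blast
  with c(2) show "x = 0"
    by (simp add: comp_permutes_eq_0_iff[OF p])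
qed

lemma LCD_code_comp_permutes:
  assumes p: "p permutes {..<n}" and C: "LCD_code n k C"
  shows "LCD_code n k ((\<lambda>c. c \<circ> p) ` C)"
proof -
  have sC: "F3vs.subspace C" and CF: "C \<subseteq> F3n n" and dC: "F3vs.dim C = k"
    and ndC: "nondegenerate n C"
    using C by (auto simp: LCD_code_iff_nondegenerate linear_code_def)
  have "(\<lambda>c. c \<circ> p) ` C \<subseteq> F3n n"
    using CF comp_permutes_in_F3n[OF p] by blast
  moreover have "F3vs.subspace ((\<lambda>c. c \<circ> p) ` C)"
    by (rule module_hom.subspace_image[OF module_hom_comp_right sC])
  moreover have "F3vs.dim ((\<lambda>c. c \<circ> p) ` C) = k"
    using F3vs_dim_inj_image[OF module_hom_comp_right inj_comp_permutes[OF p]] dC by simp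
  moreover have "nondegenerate n ((\<lambda>c. c \<circ> p) ` C)"
    using p ndC by (rule nondegenerate_comp_permutes)
  ultimately show ?thesis
    unfolding LCD_code_iff_nondegenerate linear_code_def by blast
qed

lemma min_dist_comp_permutes:
  assumes "p permutes {..<n}"
  shows "min_dist n ((\<lambda>c. c \<circ> p) ` C) = min_dist n C"
proof -
  have "{wt n x | x. x \<in> (\<lambda>c. c \<circ> p) ` C \<and> x \<noteq> 0} = {wt n (c \<circ> p) | c. c \<in> C \<and> c \<circ> p \<noteq> 0}"
    by blast
  also have "\<dots> = {wt n c | c. c \<in> C \<and> c \<noteq> 0}"
    by (simp add: wt_comp_permutes[OF assms] comp_permutes_eq_0_iff[OF assms])
  finally show ?thesis
    unfolding min_dist_def by simp
qed

lemma LCD_code_smaller_length: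
  assumes "LCD_code n k C" "C \<subseteq> F3n m" "m \<le> n"
  shows "LCD_code m k C"
proof -
  have "inner_E m x y = inner_E n x y" if "x \<in> C" for x y
    using that assms(2,3) inner_E_eq_if_F3n by blast
  then have "nondegenerate m C \<longleftrightarrow> nondegenerate n C"
    unfolding nondegenerate_def by auto
  with assms show ?thesis
    by (simp add: LCD_code_iff_nondegenerate linear_code_def)
qed

lemma min_dist_smaller_length:
  assumes "C \<subseteq> F3n m" "m \<le> n"
  shows "min_dist m C = min_dist n C"
proof -
  have "wt m x = wt n x" if "x \<in> C" for x
    using that assms wt_eq_if_F3n by blast
  then have "{wt m x | x. x \<in> C \<and> x \<noteq> 0} = {wt n x | x. x \<in> C \<and> x \<noteq> 0}"
    by force
  then show ?thesis
    unfolding min_dist_def by simp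
qed

lemma permutes_onto_tail:
  assumes "Z \<subseteq> {..<n}"
  obtains p where "p permutes {..<n}" "p ` {n - card Z..<n} = Z"
proof -
  define m where "m = n - card Z"
  have "finite Z"
    using assms finite_subset by blast
  have "card Z \<le> n"
    using card_mono[OF _ assms] by simp
  have "card {..<m} = card ({..<n} - Z)"
    using assms \<open>finite Z\<close> by (simp add: card_Diff_subset m_def)
  then obtain g where g: "bij_betw g {..<m} ({..<n} - Z)"
    using finite_same_card_bij[of "{..<m}" "{..<n} - Z"] by auto
  have "card {m..<n} = card Z"
    using \<open>card Z \<le> n\<close> by (simp add: m_def)
  then obtain h where h: "bij_betw h {m..<n} Z"
    using finite_same_card_bij[of "{m..<n}" Z] \<open>finite Z\<close> by auto
  define p where "p l = (if l < m then g l else if l < n then h l else l)" for l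
  have "bij_betw p {..<m} ({..<n} - Z) = bij_betw g {..<m} ({..<n} - Z)"
    by (rule bij_betw_cong) (simp add: p_def)
  with g have "bij_betw p {..<m} ({..<n} - Z)"
    by simp
  moreover have "bij_betw p {m..<n} Z = bij_betw h {m..<n} Z"
    by (rule bij_betw_cong) (simp add: p_def)
  with h have "bij_betw p {m..<n} Z"
    by simp
  ultimately have "bij_betw p ({..<m} \<union> {m..<n}) (({..<n} - Z) \<union> Z)"
    by (rule bij_betw_combine) blast
  moreover have "{..<m} \<union> {m..<n} = {..<n}" "({..<n} - Z) \<union> Z = {..<n}"
    using assms by (auto simp: m_def)
  ultimately have "bij_betw p {..<n} {..<n}"
    by simp
  then have "p permutes {..<n}"
    by (rule bij_imp_permutes) (auto simp: p_def m_def)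
  moreover have "p ` {m..<n} = Z"
    using \<open>bij_betw p {m..<n} Z\<close> by (simp add: bij_betw_def)
  ultimately show thesis
    using that unfolding m_def by blast
qed

lemma min_dist_le_dE3_delete_coords:
  assumes D: "LCD_code n k D" and Z: "Z \<subseteq> {..<n}" and vanish: "\<forall>c\<in>D. \<forall>l\<in>Z. c l = 0"
  shows "min_dist n D \<le> dE3 (n - card Z) k"
proof -
  obtain p where p: "p permutes {..<n}" "p ` {n - card Z..<n} = Z"
    using permutes_onto_tail[OF Z] by blast
  define E where "E = (\<lambda>c. c \<circ> p) ` D"
  have "E \<subseteq> F3n (n - card Z)"
  proof
    fix x assume "x \<in> E"
    then obtain c where c: "c \<in> D" "x = c \<circ> p"
      unfolding E_def by blast
    have "c (p l) = 0" if "n - card Z \<le> l" for l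
    proof (cases "l < n")
      case True
      with that have "p l \<in> p ` {n - card Z..<n}"
        by simp
      with c(1) vanish p(2) show ?thesis
        by blast
    next
      case False
      then have "p l = l"
        using permutes_not_in[OF p(1)] by simp
      moreover have "c \<in> F3n n"
        using D c(1) by (auto simp: LCD_code_def linear_code_def)
      ultimately show ?thesis
        using False by (simp add: F3n_def)
    qed
    with c(2) show "x \<in> F3n (n - card Z)"
      by (simp add: F3n_def)
  qed
  have "LCD_code (n - card Z) k E"
    unfolding E_def
    by (rule LCD_code_smaller_length[OF LCD_code_comp_permutes[OF p(1) D]])
       (use \<open>E \<subseteq> F3n (n - card Z)\<close> in \<open>simp_all add: E_def\<close>)
  then have "min_dist (n - card Z) E \<le> dE3 (n - card Z) k"
    by (rule min_dist_le_dE3)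
  moreover have "min_dist (n - card Z) E = min_dist n D"
    using min_dist_smaller_length[OF \<open>E \<subseteq> F3n (n - card Z)\<close> diff_le_self] min_dist_comp_permutes[OF p(1)]
    unfolding E_def by simp
  ultimately show ?thesis
    by simp
qed


section \<open>Subcodes vanishing on one or two coordinates\<close>

lemma LCD_code_vanishing_coord:
  assumes C: "LCD_code n k C" and w: "w \<in> C" "w i \<noteq> 0"
    and nd: "nondegenerate n {c\<in>C. c i = 0}"
  shows "LCD_code n (k - 1) {c\<in>C. c i = 0}"
proof -
  have sC: "F3vs.subspace C" and CF: "C \<subseteq> F3n n" and dC: "F3vs.dim C = k"
    using C by (auto simp: LCD_code_def linear_code_def)
  have "finite C"
    using CF finite_F3n finite_subset by blast
  have "F3vs.dim {c\<in>C. c i = 0} = k - 1"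
    using F3vs_dim_vanishing_coord[OF sC \<open>finite C\<close> w] dC by simp
  with nd CF F3vs_subspace_vanishing_coord[OF sC] show ?thesis
    unfolding LCD_code_iff_nondegenerate linear_code_def by blast
qed

definition coord_rep :: "nat \<Rightarrow> (nat \<Rightarrow> F3) set \<Rightarrow> nat \<Rightarrow> (nat \<Rightarrow> F3) \<Rightarrow> bool" where
  "coord_rep n C l u \<longleftrightarrow> u \<in> C \<and> (\<forall>y\<in>C. inner_E n u y = y l)"

lemma coord_rep_swap:
  assumes "coord_rep n C i u" "coord_rep n C j v"
  shows "v i = u j"
proof -
  have "v i = inner_E n u v"
    using assms by (simp add: coord_rep_def)
  also have "\<dots> = inner_E n v u"
    by (rule inner_E_commute)
  also have "\<dots> = u j"
    using assms by (simp add: coord_rep_def)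
  finally show ?thesis .
qed

lemma inner_E_eq_if_orthogonal_vanishing_coord:
  assumes sC: "F3vs.subspace C" and w: "w \<in> C" "w i \<noteq> 0"
    and orth: "\<forall>y\<in>C. y i = 0 \<longrightarrow> inner_E n x y = 0" and "y \<in> C"
  shows "inner_E n x y = inner_E n x w / w i * y i"
proof -
  have "y - scaleF3 (y i / w i) w \<in> C"
    using \<open>y \<in> C\<close> w(1) sC F3vs.subspace_diff F3vs.subspace_scale by blast
  moreover have "(y - scaleF3 (y i / w i) w) i = 0"
    using w(2) by (simp add: scaleF3_apply)
  ultimately have "inner_E n x (y - scaleF3 (y i / w i) w) = 0"
    using orth by blast
  then show ?thesis
    by (simp add: inner_E_diff_right inner_E_scale_right)
qed

lemma isotropic_coord_rep_if_degenerate: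
  assumes sC: "F3vs.subspace C" and ndC: "nondegenerate n C"
    and degenerate: "\<not> nondegenerate n {c\<in>C. c i = 0}"
  obtains u where "coord_rep n C i u" "u i = 0"
proof -
  obtain x where x: "x \<in> C" "x i = 0" "x \<noteq> 0"
    and orth: "\<forall>y\<in>C. y i = 0 \<longrightarrow> inner_E n x y = 0"
    using degenerate unfolding nondegenerate_def by auto
  have "\<not> (\<forall>c\<in>C. c i = 0)"
  proof
    assume "\<forall>c\<in>C. c i = 0"
    then have "{c\<in>C. c i = 0} = C"
      by blast
    with ndC degenerate show False
      by simp
  qed
  then obtain w where w: "w \<in> C" "w i \<noteq> 0"
    by blast
  define lam where "lam = inner_E n x w / w i"
  have rep: "inner_E n x y = lam * y i" if "y \<in> C" for y
    unfolding lam_def using sC w orth that by (rule inner_E_eq_if_orthogonal_vanishing_coord)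
  have "lam \<noteq> 0"
  proof
    assume "lam = 0"
    with rep have "\<forall>y\<in>C. inner_E n x y = 0"
      by simp
    with ndC x show False
      unfolding nondegenerate_def by blast
  qed
  define u where "u = scaleF3 (1 / lam) x"
  have "coord_rep n C i u"
    unfolding coord_rep_def u_def
    using x(1) sC F3vs.subspace_scale rep \<open>lam \<noteq> 0\<close> by (simp add: inner_E_scale_left)
  moreover have "u i = 0"
    using x(2) by (simp add: u_def scaleF3_apply)
  ultimately show thesis
    by (rule that)
qed

context
  fixes n :: nat and C :: "(nat \<Rightarrow> F3) set" and i j :: nat and ui uj :: "nat \<Rightarrow> F3"
  assumes subspace: "F3vs.subspace C"
    and rep_i: "coord_rep n C i ui" and rep_j: "coord_rep n C j uj"
    and isotropic: "ui i = 0" "uj j = 0"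
    and pairing: "ui j \<noteq> 0"
begin

lemma hyperbolic_pair_decomposition:
  assumes "y \<in> C"
  shows "y - scaleF3 (y j / ui j) ui - scaleF3 (y i / ui j) uj \<in> {c\<in>C. c i = 0 \<and> c j = 0}"
proof -
  have "ui \<in> C" "uj \<in> C"
    using rep_i rep_j by (simp_all add: coord_rep_def)
  then have "scaleF3 (y j / ui j) ui \<in> C" "scaleF3 (y i / ui j) uj \<in> C"
    using F3vs.subspace_scale[OF subspace] by simp_all
  then have "y - scaleF3 (y j / ui j) ui - scaleF3 (y i / ui j) uj \<in> C"
    using assms F3vs.subspace_diff[OF subspace] by simp
  moreover have "uj i = ui j"
    using rep_i rep_j by (rule coord_rep_swap)
  ultimately show ?thesis
    using isotropic pairing by (simp add: scaleF3_apply)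
qed

lemma dim_hyperbolic_complement:
  assumes "finite C"
  shows "F3vs.dim C = F3vs.dim {c\<in>C. c i = 0 \<and> c j = 0} + 2"
proof -
  define Cj where "Cj = {c\<in>C. c j = 0}"
  have "ui \<in> C" "uj \<in> Cj" "uj i \<noteq> 0"
    using rep_i rep_j isotropic pairing coord_rep_swap[OF rep_i rep_j]
    by (simp_all add: coord_rep_def Cj_def)
  have "F3vs.dim C = F3vs.dim Cj + 1"
    unfolding Cj_def using subspace assms \<open>ui \<in> C\<close> pairing by (rule F3vs_dim_vanishing_coord)
  also have "F3vs.dim Cj = F3vs.dim {c\<in>Cj. c i = 0} + 1"
  proof -
    have "F3vs.subspace Cj" "finite Cj"
      using F3vs_subspace_vanishing_coord[OF subspace] assms unfolding Cj_def by simp_all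
    then show ?thesis
      using \<open>uj \<in> Cj\<close> \<open>uj i \<noteq> 0\<close> by (rule F3vs_dim_vanishing_coord)
  qed
  also have "{c\<in>Cj. c i = 0} = {c\<in>C. c i = 0 \<and> c j = 0}"
    unfolding Cj_def by auto
  finally show ?thesis
    by simp
qed

text \<open>C_ij is the orthogonal complement of span {u_i, u_j} in C.\<close>

lemma nondegenerate_hyperbolic_complement:
  assumes "nondegenerate n C"
  shows "nondegenerate n {c\<in>C. c i = 0 \<and> c j = 0}"
  unfolding nondegenerate_def
proof (intro ballI impI)
  fix x assume x: "x \<in> {c\<in>C. c i = 0 \<and> c j = 0}"
    and orth: "\<forall>y\<in>{c\<in>C. c i = 0 \<and> c j = 0}. inner_E n x y = 0"
  have "inner_E n x y = 0" if "y \<in> C" for y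
  proof -
    have "inner_E n x ui = 0" "inner_E n x uj = 0"
      using x rep_i rep_j by (simp_all add: coord_rep_def inner_E_commute[of n x])
    moreover have "inner_E n x (y - scaleF3 (y j / ui j) ui - scaleF3 (y i / ui j) uj) = 0"
      using orth hyperbolic_pair_decomposition[OF that] by blast
    ultimately show ?thesis
      by (simp add: inner_E_diff_right inner_E_scale_right)
  qed
  with assms x show "x = 0"
    unfolding nondegenerate_def by blast
qed

text \<open>The only use of odd characteristic: <u, u> = 2ab <u_i, u_j> for u = a u_i + b u_j.\<close>

lemma isotropic_coord_rep_in_hyperbolic_plane:
  assumes plane: "\<And>y. y \<in> C \<Longrightarrow> y = scaleF3 (y j / ui j) ui + scaleF3 (y i / ui j) uj"
    and u: "coord_rep n C l u" "u l = 0"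
  shows "ui l * uj l = 0"
proof -
  define s where "s = ui j"
  have "uj i = s"
    unfolding s_def using rep_i rep_j by (rule coord_rep_swap)
  have "u \<in> C"
    using u(1) by (simp add: coord_rep_def)
  define a b where "a = u j / s" and "b = u i / s"
  have "u = scaleF3 a ui + scaleF3 b uj"
    using plane[OF \<open>u \<in> C\<close>] by (simp add: a_def b_def s_def)
  moreover have "inner_E n ui ui = 0" "inner_E n uj uj = 0" "inner_E n ui uj = s" "inner_E n uj ui = s"
    using rep_i rep_j isotropic \<open>uj i = s\<close> by (auto simp: coord_rep_def s_def)
  ultimately have "inner_E n u u = a * (a * 0 + b * s) + b * (a * s + b * 0)"
    by (simp only: inner_E_add_left inner_E_add_right inner_E_scale_left inner_E_scale_right)
  moreover have "inner_E n u u = 0"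
    using u by (simp add: coord_rep_def)
  ultimately have "a * b * s + a * b * s = 0"
    by (simp add: algebra_simps)
  then have "a * b * s = 0"
    by (rule F3_add_self_eq_0_iff[THEN iffD1])
  moreover have "u i * u j = a * b * s * s"
    using pairing by (simp add: a_def b_def s_def field_simps)
  moreover have "ui l = u i" "uj l = u j"
    using coord_rep_swap[OF u(1) rep_i] coord_rep_swap[OF u(1) rep_j] by simp_all
  ultimately show ?thesis
    by simp
qed

lemma hyperbolic_complement_nonzero:
  assumes "finite C" and reps: "\<forall>l<n. \<exists>u. coord_rep n C l u \<and> u l = 0"
  shows "F3vs.dim {c\<in>C. c i = 0 \<and> c j = 0} \<noteq> 0"
proof
  assume "F3vs.dim {c\<in>C. c i = 0 \<and> c j = 0} = 0"
  then have "{c\<in>C. c i = 0 \<and> c j = 0} \<subseteq> {0}"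
    using assms(1) by (intro F3vs_subset_zero_if_dim_eq_0) auto
  have plane: "y = scaleF3 (y j / ui j) ui + scaleF3 (y i / ui j) uj" if "y \<in> C" for y
  proof -
    have "y - scaleF3 (y j / ui j) ui - scaleF3 (y i / ui j) uj = 0"
      using hyperbolic_pair_decomposition[OF that] \<open>{c\<in>C. c i = 0 \<and> c j = 0} \<subseteq> {0}\<close> by blast
    then show ?thesis
      by (simp add: diff_diff_eq)
  qed
  have "ui l * uj l = 0" if "l < n" for l
  proof -
    obtain u where "coord_rep n C l u" "u l = 0"
      using reps \<open>l < n\<close> by blast
    with plane show ?thesis
      by (rule isotropic_coord_rep_in_hyperbolic_plane)
  qed
  then have "inner_E n ui uj = 0"
    unfolding inner_E_def by (intro sum.neutral) simp
  moreover have "inner_E n ui uj = ui j"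
    using rep_i rep_j coord_rep_swap[OF rep_i rep_j] by (simp add: coord_rep_def)
  ultimately show False
    using pairing by simp
qed

end

lemma coord_rep_pair_exists:
  assumes CF: "C \<subseteq> F3n n" and y: "y \<in> C" "y \<noteq> 0"
    and reps: "\<forall>l<n. \<exists>u. coord_rep n C l u \<and> u l = 0"
  obtains i j ui uj where "i < n" "j < n" "coord_rep n C i ui" "coord_rep n C j uj"
    "ui i = 0" "uj j = 0" "ui j \<noteq> 0"
proof -
  obtain i where "y i \<noteq> 0"
    using y(2) by (auto simp: fun_eq_iff)
  with y(1) CF have "i < n"
    using F3n_nonzero_imp_less by blast
  with reps obtain ui where ui: "coord_rep n C i ui" "ui i = 0"
    by blast
  have "ui \<noteq> 0"
    using ui y(1) \<open>y i \<noteq> 0\<close> by (auto simp: coord_rep_def)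
  then obtain j where "ui j \<noteq> 0"
    by (auto simp: fun_eq_iff)
  moreover have "ui \<in> C"
    using ui by (simp add: coord_rep_def)
  ultimately have "j < n"
    using CF F3n_nonzero_imp_less by blast
  with reps obtain uj where uj: "coord_rep n C j uj" "uj j = 0"
    by blast
  show thesis
    by (rule that[OF \<open>i < n\<close> \<open>j < n\<close> ui(1) uj(1) ui(2) uj(2) \<open>ui j \<noteq> 0\<close>])
qed

lemma LCD_code_vanishing_pair:
  assumes C: "LCD_code n k C" and "1 \<le> k"
    and reps: "\<forall>l<n. \<exists>u. coord_rep n C l u \<and> u l = 0"
  obtains i j where "i < n" "j < n" "i \<noteq> j" "2 < k"
    "LCD_code n (k - 2) {c\<in>C. c i = 0 \<and> c j = 0}"
proof -
  have sC: "F3vs.subspace C" and CF: "C \<subseteq> F3n n" and dC: "F3vs.dim C = k"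
    and ndC: "nondegenerate n C"
    using C by (auto simp: LCD_code_iff_nondegenerate linear_code_def)
  have "finite C"
    using CF finite_F3n finite_subset by blast
  obtain y where y: "y \<in> C" "y \<noteq> 0"
    using F3vs_ex_nonzero_if_dim_pos \<open>1 \<le> k\<close> dC by auto
  obtain i j ui uj where ij: "i < n" "j < n" and pair: "coord_rep n C i ui" "coord_rep n C j uj"
    "ui i = 0" "uj j = 0" "ui j \<noteq> 0"
    by (rule coord_rep_pair_exists[OF CF y reps])
  define D where "D = {c\<in>C. c i = 0 \<and> c j = 0}"
  have dD: "F3vs.dim C = F3vs.dim D + 2"
    unfolding D_def using sC pair \<open>finite C\<close> by (rule dim_hyperbolic_complement)
  have "F3vs.dim D \<noteq> 0"
    unfolding D_def using sC pair \<open>finite C\<close> reps by (rule hyperbolic_complement_nonzero)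
  with dD dC have "2 < k"
    by simp
  have "nondegenerate n D"
    unfolding D_def using sC pair ndC by (rule nondegenerate_hyperbolic_complement)
  moreover have "F3vs.subspace D"
  proof -
    have "D = {c \<in> {c\<in>C. c j = 0}. c i = 0}"
      unfolding D_def by auto
    then show ?thesis
      using F3vs_subspace_vanishing_coord[OF F3vs_subspace_vanishing_coord[OF sC]] by simp
  qed
  ultimately have "LCD_code n (k - 2) D"
    using CF dD dC unfolding LCD_code_iff_nondegenerate linear_code_def D_def by auto
  moreover have "i \<noteq> j"
    using pair(3,5) by auto
  ultimately show thesis
    using that[OF ij _ \<open>2 < k\<close>] unfolding D_def by blast
qed

lemma LCD_code_vanishing_subcode:
  assumes C: "LCD_code n k C" and "2 \<le> k"
  shows "\<exists>Z\<subseteq>{..<n}. (card Z = 1 \<or> card Z = 2) \<and> card Z < k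
           \<and> LCD_code n (k - card Z) {c\<in>C. \<forall>l\<in>Z. c l = 0}"
proof (cases "\<exists>i<n. \<exists>w\<in>C. w i \<noteq> 0 \<and> nondegenerate n {c\<in>C. c i = 0}")
  case True
  then obtain i w where "i < n" "w \<in> C" "w i \<noteq> 0" "nondegenerate n {c\<in>C. c i = 0}"
    by blast
  then have "LCD_code n (k - card {i}) {c\<in>C. \<forall>l\<in>{i}. c l = 0}"
    using LCD_code_vanishing_coord[OF C] by simp
  with \<open>i < n\<close> \<open>2 \<le> k\<close> show ?thesis
    by (intro exI[of _ "{i}"]) auto
next
  case False
  then have vanishing: "w l = 0" if "l < n" "w \<in> C" "nondegenerate n {c\<in>C. c l = 0}" for l w
    using that by blast
  have sC: "F3vs.subspace C" and ndC: "nondegenerate n C"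
    using C by (auto simp: LCD_code_iff_nondegenerate linear_code_def)
  have reps: "\<forall>l<n. \<exists>u. coord_rep n C l u \<and> u l = 0"
  proof (intro allI impI)
    fix l assume "l < n"
    show "\<exists>u. coord_rep n C l u \<and> u l = 0"
    proof (cases "nondegenerate n {c\<in>C. c l = 0}")
      case True
      with \<open>l < n\<close> have "coord_rep n C l 0"
        using vanishing F3vs.subspace_0[OF sC] by (simp add: coord_rep_def)
      then show ?thesis
        by auto
    next
      case False
      then show ?thesis
        by (rule isotropic_coord_rep_if_degenerate[OF sC ndC]) blast
    qed
  qed
  have "1 \<le> k"
    using \<open>2 \<le> k\<close> by simp
  then obtain i j where "i < n" "j < n" "i \<noteq> j" "2 < k"
    and D: "LCD_code n (k - 2) {c\<in>C. c i = 0 \<and> c j = 0}"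
    using LCD_code_vanishing_pair[OF C _ reps] by blast
  have "card {i, j} = 2"
    using \<open>i \<noteq> j\<close> by simp
  moreover have "{c\<in>C. \<forall>l\<in>{i, j}. c l = 0} = {c\<in>C. c i = 0 \<and> c j = 0}"
    by auto
  ultimately have "LCD_code n (k - card {i, j}) {c\<in>C. \<forall>l\<in>{i, j}. c l = 0}"
    using D by simp
  with \<open>i < n\<close> \<open>j < n\<close> \<open>card {i, j} = 2\<close> \<open>2 < k\<close> show ?thesis
    by (intro exI[of _ "{i, j}"]) auto
qed


theorem corollary5p4:
  fixes n k :: nat
  assumes "2 \<le> k" and "k \<le> n"
  shows "dE3 n k \<le> max (dE3 (n - 1) (k - 1)) (dE3 (n - 2) (k - 2))"
proof (rule dE3_le)
  show "k \<le> n"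
    by fact
  fix C assume C: "LCD_code n k C"
  then obtain Z where Z: "Z \<subseteq> {..<n}" "card Z = 1 \<or> card Z = 2" "card Z < k"
    and D: "LCD_code n (k - card Z) {c\<in>C. \<forall>l\<in>Z. c l = 0}"
    using LCD_code_vanishing_subcode[OF C assms(1)] by blast
  have "1 \<le> F3vs.dim {c\<in>C. \<forall>l\<in>Z. c l = 0}"
    using D Z(3) by (simp add: LCD_code_def linear_code_def)
  then have "min_dist n C \<le> min_dist n {c\<in>C. \<forall>l\<in>Z. c l = 0}"
    by (intro min_dist_subcode) auto
  also have "\<dots> \<le> dE3 (n - card Z) (k - card Z)"
    using D Z(1) by (rule min_dist_le_dE3_delete_coords) simp
  also have "\<dots> \<le> max (dE3 (n - 1) (k - 1)) (dE3 (n - 2) (k - 2))"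
    using Z(2) by auto
  finally show "min_dist n C \<le> max (dE3 (n - 1) (k - 1)) (dE3 (n - 2) (k - 2))" .
qed

end
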